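(* Let $n\ge 6$ and let $G$ be a $4$-Sachs minimal graph in $\mathfrak{G}_{n,2n-4}$. If $\Delta(G)=n-2$, then $G$ is the complete bipartite graph $K_{2,n-2}$.
   Context: $\mathfrak{G}_{n,m}$ is the set of connected simple graphs with $n$ vertices and $m$ edges. $\mathbf{a}_4(G)$ is the coefficient of $\lambda^{n-4}$ in $\det(\lambda\mathbf{I}-\mathbf{A}(G))$ (equivalently, number of 2-matchings minus twice the number of 4-cycles). $G\in\mathfrak{G}_{n,m}$ is $4$-Sachs minimal if $\mathbf{a}_4(G)=\min\{\mathbf{a}_4(H):H\in\mathfrak{G}_{n,m}\}$. $\Delta(G)$ is the maximum degree. *)

theory Defs
  imports Main
begin

definition simple_graph :: "'a set \<Rightarrow> 'a set set \<Rightarrow> bool" where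
  "simple_graph V E \<longleftrightarrow> finite V \<and>
     (\<forall>e\<in>E. \<exists>u v. u \<in> V \<and> v \<in> V \<and> u \<noteq> v \<and> e = {u, v})"

definition connected_graph :: "'a set \<Rightarrow> 'a set set \<Rightarrow> bool" where
  "connected_graph V E \<longleftrightarrow>
     (\<forall>u\<in>V. \<forall>v\<in>V. (u, v) \<in> {(x, y). {x, y} \<in> E}\<^sup>*)"

definition graph_class :: "nat \<Rightarrow> nat \<Rightarrow> 'a set \<Rightarrow> 'a set set \<Rightarrow> bool" where
  "graph_class n m V E \<longleftrightarrow> simple_graph V E \<and> connected_graph V E \<and>
     card V = n \<and> card E = m"

definition two_matchings :: "'a set set \<Rightarrow> 'a set set set" where
  "two_matchings E = {M. M \<subseteq> E \<and> card M = 2 \<and> (\<forall>e\<in>M. \<forall>f\<in>M. e \<noteq> f \<longrightarrow> e \<inter> f = {})}"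

definition four_cycles :: "'a set set \<Rightarrow> 'a set set set" where
  "four_cycles E = {C. C \<subseteq> E \<and> (\<exists>a b c d. distinct [a, b, c, d] \<and>
      C = {{a, b}, {b, c}, {c, d}, {d, a}})}"

definition a4 :: "'a set set \<Rightarrow> int" where
  "a4 E = int (card (two_matchings E)) - 2 * int (card (four_cycles E))"

definition sachs4_minimal :: "nat \<Rightarrow> nat \<Rightarrow> 'a set \<Rightarrow> 'a set set \<Rightarrow> bool" where
  "sachs4_minimal n m V E \<longleftrightarrow> graph_class n m V E \<and>
     (\<forall>(V' :: 'a set) E'. graph_class n m V' E' \<longrightarrow> a4 E \<le> a4 E')"

definition degree :: "'a set set \<Rightarrow> 'a \<Rightarrow> nat" where
  "degree E v = card {e \<in> E. v \<in> e}"

definition max_degree :: "'a set \<Rightarrow> 'a set set \<Rightarrow> nat" where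
  "max_degree V E = Max (degree E ` V)"

definition is_complete_bipartite :: "nat \<Rightarrow> nat \<Rightarrow> 'a set \<Rightarrow> 'a set set \<Rightarrow> bool" where
  "is_complete_bipartite p q V E \<longleftrightarrow> (\<exists>A B. A \<inter> B = {} \<and> A \<union> B = V \<and>
     card A = p \<and> card B = q \<and> E = {{a, b} | a b. a \<in> A \<and> b \<in> B})"

end

theory Submission
  imports Defs
begin

text \<open>Let v be a vertex of degree n - 2, u its unique non-neighbour, N and D the
neighbourhoods of v and u, and H the set of edges avoiding v and u (these lie inside N).
Put d = |D|, k = |H| and let s be the number of incidences between D and H; then
d + k = n - 2 and s \<le> min(2k, dk). The graph K_{2,n-2} with parts {v, u} and N lies in the
same class and has a4 = 0, so a4(G) \<le> 0 by minimality. On the other hand, deleting a vertex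
w destroys every 2-matching with an edge at w and every 4-cycle through w; counting both
for w = v and then for w = u, and using that H has no more 4-cycles than 2-matchings, gives
a4(G) \<ge> 3dk - k - ds, which is positive as soon as k \<ge> 1. Hence H is empty, D = N and
G = K_{2,n-2}.\<close>

definition neighbours :: "'a set set \<Rightarrow> 'a \<Rightarrow> 'a set" where
  "neighbours E w = {x. {w, x} \<in> E}"

definition edges_avoiding :: "'a set set \<Rightarrow> 'a \<Rightarrow> 'a set set" where
  "edges_avoiding E w = {e \<in> E. w \<notin> e}"

lemma simple_graph_subset:
  assumes "simple_graph V E" and "E' \<subseteq> E"
  shows "simple_graph V E'"
  using assms unfolding simple_graph_def by blast

lemma simple_graph_edgeE:
  assumes "simple_graph V E" and "e \<in> E"
  obtains x y where "e = {x, y}" and "x \<noteq> y" and "x \<in> V" and "y \<in> V"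
  using assms unfolding simple_graph_def by blast

lemma simple_graph_edge_doubleton:
  assumes "simple_graph V E" and "{x, y} \<in> E"
  shows "x \<noteq> y" and "x \<in> V" and "y \<in> V"
proof -
  obtain a b where "{x, y} = {a, b}" "a \<noteq> b" "a \<in> V" "b \<in> V"
    using simple_graph_edgeE[OF assms] by blast
  then show "x \<noteq> y" and "x \<in> V" and "y \<in> V"
    by (auto simp: doubleton_eq_iff)
qed

lemma simple_graph_edge_subset:
  assumes "simple_graph V E" and "e \<in> E"
  shows "e \<subseteq> V"
  by (rule simple_graph_edgeE[OF assms]) simp

lemma simple_graph_card_edge:
  assumes "simple_graph V E" and "e \<in> E"
  shows "card e = 2"
  by (rule simple_graph_edgeE[OF assms]) simp

lemma simple_graph_finite_vertices: "simple_graph V E \<Longrightarrow> finite V"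
  by (simp add: simple_graph_def)

lemma simple_graph_finite_edges:
  assumes "simple_graph V E"
  shows "finite E"
proof (rule finite_subset)
  show "E \<subseteq> Pow V"
    using simple_graph_edge_subset[OF assms] by blast
  show "finite (Pow V)"
    using simple_graph_finite_vertices[OF assms] by simp
qed

lemma neighbours_subset:
  assumes "simple_graph V E"
  shows "neighbours E w \<subseteq> V"
  using simple_graph_edge_doubleton(3)[OF assms] by (auto simp: neighbours_def)

lemma finite_neighbours:
  assumes "simple_graph V E"
  shows "finite (neighbours E w)"
  using neighbours_subset[OF assms] simple_graph_finite_vertices[OF assms] by (rule finite_subset)

lemma not_in_neighbours_self:
  assumes "simple_graph V E"
  shows "w \<notin> neighbours E w"
  using simple_graph_edge_doubleton(1)[OF assms, of w w] by (auto simp: neighbours_def)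

lemma inj_on_insert_doubleton: "inj_on (\<lambda>x. {w, x}) A"
  by (auto intro: inj_onI simp: doubleton_eq_iff)

lemma edges_at_eq_image_neighbours:
  assumes "simple_graph V E"
  shows "{e \<in> E. w \<in> e} = (\<lambda>x. {w, x}) ` neighbours E w"
proof
  show "{e \<in> E. w \<in> e} \<subseteq> (\<lambda>x. {w, x}) ` neighbours E w"
  proof
    fix e assume e: "e \<in> {e \<in> E. w \<in> e}"
    then obtain x y where "e = {x, y}"
      using simple_graph_edgeE[OF assms] by blast
    with e have "e = {w, if x = w then y else x}"
      by auto
    with e show "e \<in> (\<lambda>x. {w, x}) ` neighbours E w"
      by (auto simp: neighbours_def)
  qed
qed (auto simp: neighbours_def)

lemma degree_eq_card_neighbours:
  assumes "simple_graph V E"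
  shows "degree E w = card (neighbours E w)"
  unfolding degree_def edges_at_eq_image_neighbours[OF assms]
  by (rule card_image[OF inj_on_insert_doubleton])

lemma edges_split_at:
  assumes "simple_graph V E"
  shows "E = (\<lambda>x. {w, x}) ` neighbours E w \<union> edges_avoiding E w"
  using edges_at_eq_image_neighbours[OF assms, of w] unfolding edges_avoiding_def by blast

lemma card_edges_split_at:
  assumes "simple_graph V E"
  shows "card E = card (neighbours E w) + card (edges_avoiding E w)"
proof -
  have "card E = card ((\<lambda>x. {w, x}) ` neighbours E w) + card (edges_avoiding E w)"
    by (subst edges_split_at[OF assms, of w], rule card_Un_disjoint)
      (use simple_graph_finite_edges[OF assms] finite_neighbours[OF assms] in
        \<open>auto simp: edges_avoiding_def\<close>)
  then show ?thesis
    by (simp add: card_image[OF inj_on_insert_doubleton])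
qed

lemma mult_card_le_card_if_fibres_ge:
  assumes "finite T" and "\<And>s. s \<in> S \<Longrightarrow> k \<le> card {t \<in> T. f t = s}"
  shows "k * card S \<le> card T"
proof (cases "finite S")
  case True
  have "k * card S = (\<Sum>s\<in>S. k)"
    by simp
  also have "\<dots> \<le> (\<Sum>s\<in>S. card {t \<in> T. f t = s})"
    by (rule sum_mono) (rule assms(2))
  also have "\<dots> = card (\<Union>s\<in>S. {t \<in> T. f t = s})"
    by (rule card_UN_disjoint[symmetric]) (use True assms(1) in auto)
  also have "\<dots> \<le> card T"
    by (rule card_mono) (use assms(1) in auto)
  finally show ?thesis .
qed simp

lemma card_le_mult_card_image_if_fibres_le:
  assumes "finite T" and "\<And>t. t \<in> T \<Longrightarrow> card {t' \<in> T. f t' = f t} \<le> k"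
  shows "card T \<le> k * card (f ` T)"
proof -
  have "card T = card (\<Union>s\<in>f ` T. {t \<in> T. f t = s})"
    by (rule arg_cong[where f = card]) auto
  also have "\<dots> = (\<Sum>s\<in>f ` T. card {t \<in> T. f t = s})"
    by (rule card_UN_disjoint) (use assms(1) in auto)
  also have "\<dots> \<le> (\<Sum>s\<in>f ` T. k)"
    by (rule sum_mono) (use assms(2) in auto)
  finally show ?thesis
    by (simp add: mult.commute)
qed

lemma card_doubleton_le: "card {a, b} \<le> 2"
  by (cases "a = b") simp_all

definition incidences :: "'a set \<Rightarrow> 'a set set \<Rightarrow> ('a \<times> 'a set) set" where
  "incidences A F = {(x, f). x \<in> A \<and> f \<in> F \<and> x \<in> f}"

lemma card_incidences:
  assumes "finite A" and "finite F"
  shows "card (incidences A F) = (\<Sum>f\<in>F. card (A \<inter> f))"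
proof -
  have "incidences A F = (\<lambda>(f, x). (x, f)) ` (SIGMA f:F. A \<inter> f)"
    by (auto simp: incidences_def)
  moreover have "inj_on (\<lambda>(f, x). (x, f)) (SIGMA f:F. A \<inter> f)"
    by (auto intro: inj_onI)
  ultimately show ?thesis
    using assms by (simp add: card_image)
qed

lemma card_off_diagonal:
  assumes "finite A"
  shows "card {(x, y). x \<in> A \<and> y \<in> A \<and> x \<noteq> y} + card A = card A * card A"
proof -
  let ?off = "{(x, y). x \<in> A \<and> y \<in> A \<and> x \<noteq> y}" and ?diag = "(\<lambda>x. (x, x)) ` A"
  have "card (A \<times> A) = card (?off \<union> ?diag)"
    by (rule arg_cong[where f = card]) auto
  also have "\<dots> = card ?off + card ?diag"
    by (rule card_Un_disjoint) (use assms in \<open>auto intro: finite_subset[of _ "A \<times> A"]\<close>)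
  also have "card ?diag = card A"
    by (rule card_image) (auto intro: inj_onI)
  finally show ?thesis
    by (simp add: card_cartesian_product)
qed

section \<open>2-matchings and 4-cycles\<close>

lemma finite_two_matchings: "finite E \<Longrightarrow> finite (two_matchings E)"
  by (rule finite_subset[of _ "Pow E"]) (auto simp: two_matchings_def)

lemma two_matchings_subset: "E' \<subseteq> E \<Longrightarrow> two_matchings E' \<subseteq> two_matchings E"
  by (auto simp: two_matchings_def)

lemma doubleton_in_two_matchings:
  assumes "e \<in> E" and "f \<in> E" and "e \<inter> f = {}" and "e \<noteq> f"
  shows "{e, f} \<in> two_matchings E"
  using assms unfolding two_matchings_def by auto

lemma two_matchingsE:
  assumes "M \<in> two_matchings E"
  obtains e f where "M = {e, f}" and "e \<in> E" and "f \<in> E" and "e \<inter> f = {}" and "e \<noteq> f"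
  using assms unfolding two_matchings_def by (auto simp: card_2_iff)

text \<open>The pair (x, f) stands for the 2-matching {{w, x}, f}, one of whose edges meets w.\<close>

definition matching_pairs_at :: "'a set set \<Rightarrow> 'a \<Rightarrow> ('a \<times> 'a set) set" where
  "matching_pairs_at E w = {(x, f). x \<in> neighbours E w \<and> f \<in> edges_avoiding E w \<and> x \<notin> f}"

lemma card_matching_pairs_at:
  assumes "simple_graph V E"
  shows "card (matching_pairs_at E w) + card (incidences (neighbours E w) (edges_avoiding E w))
    = card (neighbours E w) * card (edges_avoiding E w)"
proof -
  let ?N = "neighbours E w" and ?F = "edges_avoiding E w"
  have fin: "finite (?N \<times> ?F)"
    using finite_neighbours[OF assms] simple_graph_finite_edges[OF assms]
    by (simp add: edges_avoiding_def)
  have "?N \<times> ?F = matching_pairs_at E w \<union> incidences ?N ?F"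
    by (auto simp: matching_pairs_at_def incidences_def)
  moreover have "matching_pairs_at E w \<inter> incidences ?N ?F = {}"
    by (auto simp: matching_pairs_at_def incidences_def)
  ultimately have "card (?N \<times> ?F) = card (matching_pairs_at E w) + card (incidences ?N ?F)"
    using fin by (simp add: card_Un_disjoint)
  then show ?thesis
    by (simp add: card_cartesian_product)
qed

lemma matching_pairs_at_image_subset:
  "(\<lambda>(x, f). {{w, x}, f}) ` matching_pairs_at E w
    \<subseteq> two_matchings E - two_matchings (edges_avoiding E w)"
proof
  fix M assume "M \<in> (\<lambda>(x, f). {{w, x}, f}) ` matching_pairs_at E w"
  then obtain x f where "(x, f) \<in> matching_pairs_at E w" and M: "M = {{w, x}, f}"
    by auto
  then have "{w, x} \<in> E" "f \<in> E" "w \<notin> f" "x \<notin> f"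
    by (auto simp: matching_pairs_at_def neighbours_def edges_avoiding_def)
  then have "{{w, x}, f} \<in> two_matchings E"
    by (intro doubleton_in_two_matchings) auto
  moreover have "{{w, x}, f} \<notin> two_matchings (edges_avoiding E w)"
    by (simp add: two_matchings_def edges_avoiding_def)
  ultimately show "M \<in> two_matchings E - two_matchings (edges_avoiding E w)"
    by (simp add: M)
qed

lemma card_two_matchings_delete_vertex:
  assumes "simple_graph V E"
  shows "card (matching_pairs_at E w) + card (two_matchings (edges_avoiding E w))
    \<le> card (two_matchings E)"
proof -
  let ?M = "two_matchings E" and ?M' = "two_matchings (edges_avoiding E w)"
  let ?h = "\<lambda>(x, f). {{w, x}, f}"
  have fin: "finite ?M"
    by (rule finite_two_matchings[OF simple_graph_finite_edges[OF assms]])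
  have sub: "?M' \<subseteq> ?M"
    by (rule two_matchings_subset) (auto simp: edges_avoiding_def)
  have "inj_on ?h (matching_pairs_at E w)"
    by (rule inj_onI) (auto simp: matching_pairs_at_def edges_avoiding_def doubleton_eq_iff)
  then have "card (matching_pairs_at E w) = card (?h ` matching_pairs_at E w)"
    by (rule card_image[symmetric])
  also have "\<dots> \<le> card (?M - ?M')"
  proof (rule card_mono)
    show "finite (?M - ?M')"
      using fin by simp
    show "?h ` matching_pairs_at E w \<subseteq> ?M - ?M'"
      by (rule matching_pairs_at_image_subset)
  qed
  also have "\<dots> = card ?M - card ?M'"
    using finite_subset[OF sub fin] by (rule card_Diff_subset[OF _ sub])
  finally show ?thesis
    using card_mono[OF fin sub] by linarith
qed

definition cycle4 :: "'a \<Rightarrow> 'a \<Rightarrow> 'a \<Rightarrow> 'a \<Rightarrow> 'a set set" where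
  "cycle4 a b c d = {{a, b}, {b, c}, {c, d}, {d, a}}"

lemma cycle4_rotate: "cycle4 a b c d = cycle4 b c d a"
  by (simp add: cycle4_def insert_commute)

lemma cycle4_reverse: "cycle4 a b c d = cycle4 a d c b"
  by (simp add: cycle4_def insert_commute)

lemma four_cycles_cycle4:
  "four_cycles E = {C. C \<subseteq> E \<and> (\<exists>a b c d. distinct [a, b, c, d] \<and> C = cycle4 a b c d)}"
  unfolding four_cycles_def cycle4_def ..

lemma finite_four_cycles: "finite E \<Longrightarrow> finite (four_cycles E)"
  by (rule finite_subset[of _ "Pow E"]) (auto simp: four_cycles_def)

lemma cycle4_through_vertex:
  assumes "distinct [a, b, c, d]" and "w \<in> \<Union>(cycle4 a b c d)"
  obtains x y z where "distinct [w, x, y, z]" and "cycle4 a b c d = cycle4 w x y z"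
proof -
  have "w = a \<or> w = b \<or> w = c \<or> w = d"
    using assms(2) by (auto simp: cycle4_def)
  then show thesis
  proof (elim disjE)
    assume "w = a"
    then show thesis
      using that[of b c d] assms(1) by simp
  next
    assume "w = b"
    then show thesis
      using that[of c d a] assms(1) cycle4_rotate[of a b c d] by auto
  next
    assume "w = c"
    then show thesis
      using that[of d a b] assms(1) cycle4_rotate[of a b c d] cycle4_rotate[of b c d a] by auto
  next
    assume "w = d"
    then show thesis
      using that[of a b c] assms(1) cycle4_rotate[of d a b c] by auto
  qed
qed

text \<open>The triple (x, y, z) stands for the 4-cycle w x y z; every 4-cycle through w arises from
exactly two triples, one for each orientation.\<close>

definition four_cycle_paths :: "'a set set \<Rightarrow> 'a \<Rightarrow> ('a \<times> 'a \<times> 'a) set" where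
  "four_cycle_paths E w = {(x, y, z). distinct [w, x, y, z] \<and> cycle4 w x y z \<subseteq> E}"

lemma four_cycle_paths_subset:
  assumes "simple_graph V E"
  shows "four_cycle_paths E w \<subseteq> V \<times> V \<times> V"
proof
  fix t assume t_in: "t \<in> four_cycle_paths E w"
  obtain x y z where t: "t = (x, y, z)"
    by (cases t)
  have "{w, x} \<in> E" "{y, z} \<in> E"
    using t_in by (simp_all add: t four_cycle_paths_def cycle4_def)
  then show "t \<in> V \<times> V \<times> V"
    using simple_graph_edge_doubleton[OF assms] by (simp add: t)
qed

lemma finite_four_cycle_paths:
  assumes "simple_graph V E"
  shows "finite (four_cycle_paths E w)"
  using simple_graph_finite_vertices[OF assms]
  by (intro finite_subset[OF four_cycle_paths_subset[OF assms]]) simp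

lemma card_four_cycles_le_through_add_avoiding:
  assumes "simple_graph V E"
  shows "card (four_cycles E)
    \<le> card {C \<in> four_cycles E. w \<in> \<Union>C} + card (four_cycles (edges_avoiding E w))"
proof -
  let ?through = "{C \<in> four_cycles E. w \<in> \<Union>C}"
  have finE: "finite E"
    by (rule simple_graph_finite_edges[OF assms])
  have "four_cycles E \<subseteq> ?through \<union> four_cycles (edges_avoiding E w)"
  proof
    fix C assume C: "C \<in> four_cycles E"
    show "C \<in> ?through \<union> four_cycles (edges_avoiding E w)"
    proof (cases "w \<in> \<Union>C")
      case False
      have "C \<subseteq> E"
        using C by (simp add: four_cycles_def)
      with False have "C \<subseteq> edges_avoiding E w"
        by (auto simp: edges_avoiding_def)
      with C show ?thesis
        by (simp add: four_cycles_def)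
    qed (use C in simp)
  qed
  moreover have "finite (?through \<union> four_cycles (edges_avoiding E w))"
    using finite_four_cycles[OF finE] finite_four_cycles[of "edges_avoiding E w"] finE
    by (simp add: edges_avoiding_def)
  ultimately have "card (four_cycles E) \<le> card (?through \<union> four_cycles (edges_avoiding E w))"
    by (rule card_mono[rotated])
  also have "\<dots> \<le> card ?through + card (four_cycles (edges_avoiding E w))"
    by (rule card_Un_le)
  finally show ?thesis .
qed

lemma two_card_four_cycles_through_le:
  assumes "simple_graph V E"
  shows "2 * card {C \<in> four_cycles E. w \<in> \<Union>C} \<le> card (four_cycle_paths E w)"
proof (rule mult_card_le_card_if_fibres_ge[where f = "\<lambda>(x, y, z). cycle4 w x y z"])
  show "finite (four_cycle_paths E w)"
    by (rule finite_four_cycle_paths[OF assms])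
next
  fix C assume "C \<in> {C \<in> four_cycles E. w \<in> \<Union>C}"
  then obtain a b c d where abcd: "distinct [a, b, c, d]" "C = cycle4 a b c d"
    and "C \<subseteq> E" and w_in: "w \<in> \<Union>(cycle4 a b c d)"
    unfolding four_cycles_cycle4 by blast
  moreover obtain x y z where "distinct [w, x, y, z]" "cycle4 a b c d = cycle4 w x y z"
    by (rule cycle4_through_vertex[OF abcd(1) w_in])
  ultimately have xyz: "distinct [w, x, y, z]" "C = cycle4 w x y z" "C \<subseteq> E"
    by simp_all
  let ?fibre = "{t \<in> four_cycle_paths E w. (\<lambda>(x, y, z). cycle4 w x y z) t = C}"
  have "{(x, y, z), (z, y, x)} \<subseteq> ?fibre"
    using xyz cycle4_reverse[of w x y z] by (auto simp: four_cycle_paths_def)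
  then have "card {(x, y, z), (z, y, x)} \<le> card ?fibre"
    by (rule card_mono[rotated]) (simp add: finite_four_cycle_paths[OF assms])
  then show "2 \<le> card ?fibre"
    using xyz(1) by simp
qed

lemma a4_delete_vertex:
  assumes "simple_graph V E"
  shows "int (card (matching_pairs_at E w)) - int (card (four_cycle_paths E w))
    + a4 (edges_avoiding E w) \<le> a4 E"
  using card_two_matchings_delete_vertex[OF assms, of w]
    card_four_cycles_le_through_add_avoiding[OF assms, of w]
    two_card_four_cycles_through_le[OF assms, of w]
  unfolding a4_def by linarith

text \<open>A 4-cycle has exactly 8 orientations (a, b, c, d), while a 2-matching {{a, b}, {c, d}} has
at most 8 orderings; reading off the edges ab and cd of an oriented 4-cycle therefore shows
that there are no more 4-cycles than 2-matchings.\<close>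

definition oriented_four_cycles :: "'a set set \<Rightarrow> ('a \<times> 'a \<times> 'a \<times> 'a) set" where
  "oriented_four_cycles E = {(a, b, c, d). distinct [a, b, c, d] \<and> cycle4 a b c d \<subseteq> E}"

definition oriented_two_matchings :: "'a set set \<Rightarrow> ('a \<times> 'a \<times> 'a \<times> 'a) set" where
  "oriented_two_matchings E = {(a, b, c, d). distinct [a, b, c, d] \<and> {a, b} \<in> E \<and> {c, d} \<in> E}"

lemma oriented_four_cycles_subset: "oriented_four_cycles E \<subseteq> oriented_two_matchings E"
  by (auto simp: oriented_four_cycles_def oriented_two_matchings_def cycle4_def)

lemma finite_oriented_two_matchings:
  assumes "simple_graph V E"
  shows "finite (oriented_two_matchings E)"
proof (rule finite_subset)
  show "oriented_two_matchings E \<subseteq> V \<times> V \<times> V \<times> V"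
    using simple_graph_edge_doubleton(2,3)[OF assms] by (auto simp: oriented_two_matchings_def)
  show "finite (V \<times> V \<times> V \<times> V)"
    using simple_graph_finite_vertices[OF assms] by simp
qed

lemma eight_card_four_cycles_le:
  assumes "simple_graph V E"
  shows "8 * card (four_cycles E) \<le> card (oriented_four_cycles E)"
proof (rule mult_card_le_card_if_fibres_ge[where f = "\<lambda>(a, b, c, d). cycle4 a b c d"])
  show "finite (oriented_four_cycles E)"
    using finite_oriented_two_matchings[OF assms] oriented_four_cycles_subset
    by (rule finite_subset[rotated])
next
  fix C assume "C \<in> four_cycles E"
  then obtain a b c d where abcd: "distinct [a, b, c, d]" "C = cycle4 a b c d" "C \<subseteq> E"
    unfolding four_cycles_cycle4 by blast
  let ?symmetries = "{(a, b, c, d), (b, c, d, a), (c, d, a, b), (d, a, b, c),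
    (a, d, c, b), (d, c, b, a), (c, b, a, d), (b, a, d, c)}"
  let ?fibre = "{t \<in> oriented_four_cycles E. (\<lambda>(a, b, c, d). cycle4 a b c d) t = C}"
  have "cycle4 b c d a = C" "cycle4 c d a b = C" "cycle4 d a b c = C" "cycle4 a d c b = C"
    "cycle4 d c b a = C" "cycle4 c b a d = C" "cycle4 b a d c = C"
    unfolding abcd(2) cycle4_def by (simp_all add: insert_commute)
  then have "?symmetries \<subseteq> ?fibre"
    using abcd by (auto simp: oriented_four_cycles_def)
  moreover have "finite ?fibre"
    using finite_oriented_two_matchings[OF assms] oriented_four_cycles_subset
    by (auto intro: finite_subset)
  ultimately have "card ?symmetries \<le> card ?fibre"
    by (rule card_mono[rotated])
  moreover have "card ?symmetries = 8"
    using abcd(1) by (simp add: card_insert_if)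
  ultimately show "8 \<le> card ?fibre"
    by simp
qed

lemma doubleton_pair_eq_cases:
  assumes "{{a', b'}, {c', d'}} = {{a, b}, {c, d}}"
  shows "(a', b', c', d') \<in> {(a, b, c, d), (b, a, c, d), (a, b, d, c), (b, a, d, c),
    (c, d, a, b), (d, c, a, b), (c, d, b, a), (d, c, b, a)}"
  using assms by (simp add: doubleton_eq_iff) metis

lemma card_oriented_two_matchings_le:
  assumes "simple_graph V E"
  shows "card (oriented_two_matchings E) \<le> 8 * card (two_matchings E)"
proof -
  let ?g = "\<lambda>(a, b, c, d). {{a, b}, {c, d}}"
  have "card (oriented_two_matchings E) \<le> 8 * card (?g ` oriented_two_matchings E)"
  proof (rule card_le_mult_card_image_if_fibres_le)
    show "finite (oriented_two_matchings E)"
      by (rule finite_oriented_two_matchings[OF assms])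
  next
    fix t assume "t \<in> oriented_two_matchings E"
    obtain a b c d where t: "t = (a, b, c, d)"
      by (cases t)
    define symmetries where "symmetries = [(a, b, c, d), (b, a, c, d), (a, b, d, c), (b, a, d, c),
      (c, d, a, b), (d, c, a, b), (c, d, b, a), (d, c, b, a)]"
    have "{t' \<in> oriented_two_matchings E. ?g t' = ?g t} \<subseteq> set symmetries"
    proof clarify
      fix a' b' c' d' assume "{{a', b'}, {c', d'}} = ?g t"
      then have "{{a', b'}, {c', d'}} = {{a, b}, {c, d}}"
        by (simp add: t)
      then show "(a', b', c', d') \<in> set symmetries"
        unfolding symmetries_def list.set by (rule doubleton_pair_eq_cases)
    qed
    then have "card {t' \<in> oriented_two_matchings E. ?g t' = ?g t} \<le> card (set symmetries)"
      by (rule card_mono[rotated]) simp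
    also have "\<dots> \<le> length symmetries"
      by (rule card_length)
    finally show "card {t' \<in> oriented_two_matchings E. ?g t' = ?g t} \<le> 8"
      by (simp add: symmetries_def)
  qed
  also have "card (?g ` oriented_two_matchings E) \<le> card (two_matchings E)"
  proof (rule card_mono)
    show "finite (two_matchings E)"
      by (rule finite_two_matchings[OF simple_graph_finite_edges[OF assms]])
    show "?g ` oriented_two_matchings E \<subseteq> two_matchings E"
      by (auto intro!: doubleton_in_two_matchings
          simp: oriented_two_matchings_def doubleton_eq_iff)
  qed
  finally show ?thesis
    by simp
qed

lemma card_four_cycles_le_two_matchings:
  assumes "simple_graph V E"
  shows "card (four_cycles E) \<le> card (two_matchings E)"
proof -
  have "8 * card (four_cycles E) \<le> card (oriented_four_cycles E)"
    by (rule eight_card_four_cycles_le[OF assms])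
  also have "\<dots> \<le> card (oriented_two_matchings E)"
    by (rule card_mono[OF finite_oriented_two_matchings[OF assms] oriented_four_cycles_subset])
  also have "\<dots> \<le> 8 * card (two_matchings E)"
    by (rule card_oriented_two_matchings_le[OF assms])
  finally show ?thesis
    by simp
qed

lemma a4_ge_neg_card_two_matchings:
  assumes "simple_graph V E"
  shows "- int (card (two_matchings E)) \<le> a4 E"
  using card_four_cycles_le_two_matchings[OF assms] unfolding a4_def by linarith

definition two_paths :: "'a set set \<Rightarrow> ('a \<times> 'a \<times> 'a) set" where
  "two_paths E = {(x, y, z). x \<noteq> z \<and> {x, y} \<in> E \<and> {y, z} \<in> E}"

lemma finite_two_paths:
  assumes "simple_graph V E"
  shows "finite (two_paths E)"
proof (rule finite_subset)
  show "two_paths E \<subseteq> V \<times> V \<times> V"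
    using simple_graph_edge_doubleton(2,3)[OF assms] by (auto simp: two_paths_def)
  show "finite (V \<times> V \<times> V)"
    using simple_graph_finite_vertices[OF assms] by simp
qed

lemma finite_edge_pairs: "finite E \<Longrightarrow> finite {(e, f). e \<in> E \<and> f \<in> E \<and> P e f}"
  by (rule finite_subset[of _ "E \<times> E"]) auto

lemma card_two_paths_le_meeting_pairs:
  assumes "simple_graph V E"
  shows "card (two_paths E) \<le> card {(e, f). e \<in> E \<and> f \<in> E \<and> e \<noteq> f \<and> e \<inter> f \<noteq> {}}"
proof -
  let ?h = "\<lambda>(x, y, z). ({x, y}, {y, z})"
  have "inj_on ?h (two_paths E)"
  proof (rule inj_onI)
    fix p q assume "p \<in> two_paths E" "q \<in> two_paths E" and "?h p = ?h q"
    moreover obtain x y z x' y' z' where pq: "p = (x, y, z)" "q = (x', y', z')"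
      by (cases p, cases q)
    ultimately have "(x, y, z) \<in> two_paths E" "(x', y', z') \<in> two_paths E"
      and eq: "{x, y} = {x', y'}" "{y, z} = {y', z'}"
      by simp_all
    then have "x \<noteq> z" "x' \<noteq> z'" "x \<noteq> y" "y \<noteq> z"
      using simple_graph_edge_doubleton(1)[OF assms] by (auto simp: two_paths_def)
    have "{y} = {x, y} \<inter> {y, z}"
      using \<open>x \<noteq> z\<close> by auto
    also have "\<dots> = {x', y'} \<inter> {y', z'}"
      by (simp only: eq)
    also have "\<dots> = {y'}"
      using \<open>x' \<noteq> z'\<close> by auto
    finally have "y = y'"
      by simp
    then show "p = q"
      using eq pq \<open>x \<noteq> y\<close> \<open>y \<noteq> z\<close> by (auto simp: doubleton_eq_iff)
  qed
  then have "card (two_paths E) = card (?h ` two_paths E)"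
    by (rule card_image[symmetric])
  also have "\<dots> \<le> card {(e, f). e \<in> E \<and> f \<in> E \<and> e \<noteq> f \<and> e \<inter> f \<noteq> {}}"
    by (rule card_mono[OF finite_edge_pairs[OF simple_graph_finite_edges[OF assms]]])
      (auto simp: two_paths_def doubleton_eq_iff)
  finally show ?thesis .
qed

lemma two_card_two_matchings_le_disjoint_pairs:
  assumes "simple_graph V E"
  shows "2 * card (two_matchings E) \<le> card {(e, f). e \<in> E \<and> f \<in> E \<and> e \<inter> f = {}}"
proof (rule mult_card_le_card_if_fibres_ge[where f = "\<lambda>(e, f). {e, f}"])
  show "finite {(e, f). e \<in> E \<and> f \<in> E \<and> e \<inter> f = {}}"
    by (rule finite_edge_pairs[OF simple_graph_finite_edges[OF assms]])
next
  fix M assume "M \<in> two_matchings E"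
  then obtain e f where ef: "M = {e, f}" "e \<in> E" "f \<in> E" "e \<inter> f = {}" "e \<noteq> f"
    by (rule two_matchingsE)
  let ?fibre = "{t \<in> {(e, f). e \<in> E \<and> f \<in> E \<and> e \<inter> f = {}}. (\<lambda>(e, f). {e, f}) t = M}"
  have "{(e, f), (f, e)} \<subseteq> ?fibre"
    using ef by auto
  then have "card {(e, f), (f, e)} \<le> card ?fibre"
    by (rule card_mono[rotated])
      (use finite_edge_pairs[OF simple_graph_finite_edges[OF assms]] in simp)
  then show "2 \<le> card ?fibre"
    using ef(5) by simp
qed

lemma card_two_paths_two_matchings_le:
  assumes "simple_graph V E"
  shows "card (two_paths E) + 2 * card (two_matchings E) + card E \<le> card E * card E"
proof -
  let ?meeting = "{(e, f). e \<in> E \<and> f \<in> E \<and> e \<noteq> f \<and> e \<inter> f \<noteq> {}}"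
  let ?disjoint = "{(e, f). e \<in> E \<and> f \<in> E \<and> e \<inter> f = {}}"
  let ?diagonal = "(\<lambda>e. (e, e)) ` E"
  have finE: "finite E"
    by (rule simple_graph_finite_edges[OF assms])
  have "?diagonal \<inter> ?disjoint = {}"
    using simple_graph_card_edge[OF assms] by fastforce
  then have "card ((?meeting \<union> ?disjoint) \<union> ?diagonal)
      = card (?meeting \<union> ?disjoint) + card ?diagonal"
    using finE finite_edge_pairs[OF finE] by (intro card_Un_disjoint) auto
  also have "card (?meeting \<union> ?disjoint) = card ?meeting + card ?disjoint"
    using finite_edge_pairs[OF finE] by (intro card_Un_disjoint) auto
  also have "card ?diagonal = card E"
    by (rule card_image) (auto intro: inj_onI)
  also have "card ((?meeting \<union> ?disjoint) \<union> ?diagonal) \<le> card (E \<times> E)"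
    using finE by (intro card_mono) auto
  ultimately show ?thesis
    using card_two_paths_le_meeting_pairs[OF assms] two_card_two_matchings_le_disjoint_pairs[OF assms]
    by (simp add: card_cartesian_product)
qed

section \<open>The graphs K_{2,m}\<close>

definition bipartite_edges :: "'a set \<Rightarrow> 'a set \<Rightarrow> 'a set set" where
  "bipartite_edges A B = {{a, b} | a b. a \<in> A \<and> b \<in> B}"

lemma bipartite_edges_eq_image: "bipartite_edges A B = (\<lambda>(a, b). {a, b}) ` (A \<times> B)"
  by (auto simp: bipartite_edges_def)

lemma doubleton_in_bipartite_edges:
  assumes "a \<in> A" and "b \<in> B"
  shows "{a, b} \<in> bipartite_edges A B" and "{b, a} \<in> bipartite_edges A B"
proof -
  show "{a, b} \<in> bipartite_edges A B"
    using assms unfolding bipartite_edges_def by blast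
  then show "{b, a} \<in> bipartite_edges A B"
    by (simp only: insert_commute)
qed

lemma connected_graph_bipartite_edges:
  assumes "a0 \<in> A" and "b0 \<in> B"
  shows "connected_graph (A \<union> B) (bipartite_edges A B)"
  unfolding connected_graph_def
proof (intro ballI)
  let ?R = "{(x, y). {x, y} \<in> bipartite_edges A B}"
  have sym_R: "sym (?R\<^sup>*)"
    by (rule sym_rtrancl) (auto simp: sym_def insert_commute)
  have from_a0: "(a0, x) \<in> ?R\<^sup>*" if "x \<in> A \<union> B" for x
  proof (cases "x \<in> B")
    case True
    then show ?thesis
      using assms(1) by (auto simp: bipartite_edges_def)
  next
    case False
    with that have "(a0, b0) \<in> ?R" "(b0, x) \<in> ?R"
      using assms by (auto simp: bipartite_edges_def insert_commute)
    then show ?thesis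
      by (meson rtrancl.rtrancl_into_rtrancl r_into_rtrancl)
  qed
  fix x y assume "x \<in> A \<union> B" "y \<in> A \<union> B"
  then show "(x, y) \<in> ?R\<^sup>*"
    using from_a0 sym_R by (meson rtrancl_trans symD)
qed

lemma graph_class_bipartite_edges:
  assumes "finite A" and "finite B" and "A \<inter> B = {}" and "A \<noteq> {}" and "B \<noteq> {}"
  shows "graph_class (card A + card B) (card A * card B) (A \<union> B) (bipartite_edges A B)"
proof -
  have "simple_graph (A \<union> B) (bipartite_edges A B)"
    using assms(1-3) unfolding simple_graph_def bipartite_edges_def by (simp, blast)
  moreover obtain a0 b0 where "a0 \<in> A" and "b0 \<in> B"
    using assms(4,5) by blast
  then have "connected_graph (A \<union> B) (bipartite_edges A B)"
    by (rule connected_graph_bipartite_edges)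
  moreover have "card (A \<union> B) = card A + card B"
    using assms(1-3) by (rule card_Un_disjoint)
  moreover have "card (bipartite_edges A B) = card A * card B"
  proof -
    have "inj_on (\<lambda>(a, b). {a, b}) (A \<times> B)"
      using assms(3) by (auto intro!: inj_onI simp: doubleton_eq_iff)
    then show ?thesis
      by (simp add: bipartite_edges_eq_image card_image card_cartesian_product)
  qed
  ultimately show ?thesis
    by (simp add: graph_class_def)
qed

lemma is_complete_bipartite_bipartite_edges:
  assumes "A \<inter> B = {}" and "card A = p" and "card B = q"
  shows "is_complete_bipartite p q (A \<union> B) (bipartite_edges A B)"
  unfolding is_complete_bipartite_def bipartite_edges_def
  by (intro exI[of _ A] exI[of _ B] conjI refl) (fact assms)+

lemma card_two_matchings_bipartite_edges_doubleton_le: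
  assumes "finite B"
  shows "card (two_matchings (bipartite_edges {v, u} B))
    \<le> card {(x, y). x \<in> B \<and> y \<in> B \<and> x \<noteq> y}"
proof -
  let ?pairs = "{(x, y). x \<in> B \<and> y \<in> B \<and> x \<noteq> y}"
  have "two_matchings (bipartite_edges {v, u} B) \<subseteq> (\<lambda>(x, y). {{v, x}, {u, y}}) ` ?pairs"
  proof
    fix M assume "M \<in> two_matchings (bipartite_edges {v, u} B)"
    then obtain e f where ef: "M = {e, f}" "e \<in> bipartite_edges {v, u} B"
      "f \<in> bipartite_edges {v, u} B" "e \<inter> f = {}"
      by (rule two_matchingsE)
    then obtain a b a' b' where ab: "a \<in> {v, u}" "b \<in> B" "e = {a, b}"
      and ab': "a' \<in> {v, u}" "b' \<in> B" "f = {a', b'}"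
      by (auto simp: bipartite_edges_def)
    with ef(4) have "a = v \<and> a' = u \<or> a = u \<and> a' = v" and "b \<noteq> b'"
      by auto
    then have "M = {{v, b}, {u, b'}} \<and> (b, b') \<in> ?pairs \<or> M = {{v, b'}, {u, b}} \<and> (b', b) \<in> ?pairs"
      using ef(1) ab ab' by (auto simp: insert_commute)
    then show "M \<in> (\<lambda>(x, y). {{v, x}, {u, y}}) ` ?pairs"
      by force
  qed
  then have "card (two_matchings (bipartite_edges {v, u} B))
      \<le> card ((\<lambda>(x, y). {{v, x}, {u, y}}) ` ?pairs)"
    by (rule card_mono[rotated]) (use assms in \<open>auto intro: finite_subset[of _ "B \<times> B"]\<close>)
  also have "\<dots> \<le> card ?pairs"
    by (rule card_image_le) (use assms in \<open>auto intro: finite_subset[of _ "B \<times> B"]\<close>)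
  finally show ?thesis .
qed

lemma cycle4_in_four_cycles_bipartite_edges:
  assumes "x \<in> B" and "y \<in> B" and "x \<noteq> y" and "v \<notin> B" and "u \<notin> B" and "v \<noteq> u"
  shows "cycle4 v x u y \<in> four_cycles (bipartite_edges {v, u} B)"
proof -
  have "distinct [v, x, u, y]"
    using assms by auto
  moreover have "cycle4 v x u y \<subseteq> bipartite_edges {v, u} B"
    using assms(1,2) by (simp add: cycle4_def doubleton_in_bipartite_edges)
  ultimately show ?thesis
    unfolding four_cycles_cycle4 by blast
qed

lemma cycle4_bipartite_edges_eq:
  assumes "cycle4 v x' u y' = cycle4 v x u y" and "x' \<noteq> y'"
    and "x \<in> B" and "y \<in> B" and "x' \<in> B" and "y' \<in> B" and "v \<notin> B" and "u \<notin> B" and "v \<noteq> u"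
  shows "(x', y') = (x, y) \<or> (x', y') = (y, x)"
proof -
  have "{v, x'} \<in> cycle4 v x u y" "{v, y'} \<in> cycle4 v x u y"
    unfolding assms(1)[symmetric] by (simp_all add: cycle4_def insert_commute)
  then have "x' \<in> {x, y}" "y' \<in> {x, y}"
    using assms(3-9) by (simp_all add: cycle4_def doubleton_eq_iff) blast+
  then show ?thesis
    using assms(2) by auto
qed

lemma card_pairs_le_two_card_four_cycles_bipartite_edges_doubleton:
  assumes "finite B" and "v \<notin> B" and "u \<notin> B" and "v \<noteq> u"
  shows "card {(x, y). x \<in> B \<and> y \<in> B \<and> x \<noteq> y}
    \<le> 2 * card (four_cycles (bipartite_edges {v, u} B))"
proof -
  let ?pairs = "{(x, y). x \<in> B \<and> y \<in> B \<and> x \<noteq> y}"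
  let ?g = "\<lambda>(x, y). cycle4 v x u y"
  have fin: "finite ?pairs"
    using assms(1) by (auto intro: finite_subset[of _ "B \<times> B"])
  have "card ?pairs \<le> 2 * card (?g ` ?pairs)"
  proof (rule card_le_mult_card_image_if_fibres_le[OF fin])
    fix t assume "t \<in> ?pairs"
    then obtain x y where t: "t = (x, y)" "x \<in> B" "y \<in> B"
      by blast
    have "{t' \<in> ?pairs. ?g t' = ?g t} \<subseteq> {(x, y), (y, x)}"
    proof
      fix t' assume "t' \<in> {t' \<in> ?pairs. ?g t' = ?g t}"
      then obtain x' y' where t': "t' = (x', y')" "x' \<in> B" "y' \<in> B" "x' \<noteq> y'"
        and same: "cycle4 v x' u y' = cycle4 v x u y"
        using t by auto
      show "t' \<in> {(x, y), (y, x)}"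
        using cycle4_bipartite_edges_eq[OF same t'(4) t(2,3) t'(2,3) assms(2-4)] t'(1) by blast
    qed
    then have "card {t' \<in> ?pairs. ?g t' = ?g t} \<le> card {(x, y), (y, x)}"
      by (rule card_mono[rotated]) simp
    also have "\<dots> \<le> 2"
      by (rule card_doubleton_le)
    finally show "card {t' \<in> ?pairs. ?g t' = ?g t} \<le> 2" .
  qed
  also have "card (?g ` ?pairs) \<le> card (four_cycles (bipartite_edges {v, u} B))"
  proof (rule card_mono)
    have "finite (bipartite_edges {v, u} B)"
      using assms(1) by (simp add: bipartite_edges_eq_image)
    then show "finite (four_cycles (bipartite_edges {v, u} B))"
      by (rule finite_four_cycles)
    show "?g ` ?pairs \<subseteq> four_cycles (bipartite_edges {v, u} B)"
      using assms(2-4) by (auto intro: cycle4_in_four_cycles_bipartite_edges)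
  qed
  finally show ?thesis
    by simp
qed

lemma a4_bipartite_edges_doubleton_nonpos:
  assumes "finite B" and "v \<notin> B" and "u \<notin> B" and "v \<noteq> u"
  shows "a4 (bipartite_edges {v, u} B) \<le> 0"
  using card_two_matchings_bipartite_edges_doubleton_le[OF assms(1), of v u]
    card_pairs_le_two_card_four_cycles_bipartite_edges_doubleton[OF assms]
  unfolding a4_def by linarith

section \<open>A vertex adjacent to all but one vertex\<close>

lemma mult_add_lt_three_mult:
  fixes d k s :: nat
  assumes "1 \<le> d" and "1 \<le> k" and "s \<le> 2 * k" and "s \<le> d * k"
  shows "d * s + k < 3 * (d * k)"
proof (cases "d = 1")
  case False
  then have "2 * k \<le> d * k"
    using assms(1) by simp
  moreover have "d * s \<le> d * (2 * k)"
    using assms(3) by simp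
  ultimately show ?thesis
    using assms(2) by linarith
qed (use assms in simp)

locale almost_universal_vertex =
  fixes V :: "'a set" and E :: "'a set set" and v u :: 'a
  assumes simple: "simple_graph V E"
    and connected: "connected_graph V E"
    and vertices_eq: "V = insert v (insert u (neighbours E v))"
    and u_ne_v: "u \<noteq> v"
    and u_not_neighbour: "u \<notin> neighbours E v"
    and card_edges: "card E = 2 * card (neighbours E v)"
begin

abbreviation N where "N \<equiv> neighbours E v"
abbreviation F where "F \<equiv> edges_avoiding E v"
abbreviation D where "D \<equiv> neighbours E u"
abbreviation H where "H \<equiv> edges_avoiding F u"

lemma finite_N: "finite N"
  by (rule finite_neighbours[OF simple])

lemma v_notin_N: "v \<notin> N"
  by (rule not_in_neighbours_self[OF simple])

lemma finite_D: "finite D"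
  by (rule finite_neighbours[OF simple])

lemma simple_F: "simple_graph V F"
  by (rule simple_graph_subset[OF simple]) (auto simp: edges_avoiding_def)

lemma simple_H: "simple_graph V H"
  by (rule simple_graph_subset[OF simple_F]) (auto simp: edges_avoiding_def)

lemma v_notin_D: "v \<notin> D"
  using u_not_neighbour by (simp add: neighbours_def insert_commute)

lemma neighbours_F_u: "neighbours F u = D"
  using v_notin_D u_ne_v by (auto simp: neighbours_def edges_avoiding_def)

lemma D_subset_N: "D \<subseteq> N"
proof
  fix x assume "x \<in> D"
  then have "{u, x} \<in> E"
    by (simp add: neighbours_def)
  then have "x \<in> V" and "x \<noteq> u"
    using simple_graph_edge_doubleton[OF simple] by auto
  moreover have "x \<noteq> v"
    using \<open>x \<in> D\<close> v_notin_D by blast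
  ultimately show "x \<in> N"
    using vertices_eq by blast
qed

lemma card_F: "card F = card N"
  using card_edges_split_at[OF simple, of v] card_edges by simp

lemma card_D_add_card_H: "card D + card H = card N"
  using card_edges_split_at[OF simple_F, of u] neighbours_F_u card_F by simp

lemma D_nonempty: "D \<noteq> {}"
proof -
  have "(u, v) \<in> {(x, y). {x, y} \<in> E}\<^sup>*"
    using connected vertices_eq unfolding connected_graph_def by blast
  then obtain y where "(u, y) \<in> {(x, y). {x, y} \<in> E}"
    using u_ne_v by (blast elim: converse_rtranclE)
  then show ?thesis
    by (auto simp: neighbours_def)
qed

lemma card_edge_inter_le_two:
  assumes "f \<in> E"
  shows "card (A \<inter> f) \<le> 2"
proof -
  have "card f = 2"
    using simple_graph_card_edge[OF simple assms] .
  then have "finite f"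
    by (simp add: card_ge_0_finite)
  then have "card (A \<inter> f) \<le> card f"
    by (simp add: card_mono)
  with \<open>card f = 2\<close> show ?thesis
    by simp
qed

lemma card_incidences_N_F_le: "card (incidences N F) \<le> 2 * card H + card D"
proof -
  have finF: "finite F"
    by (rule simple_graph_finite_edges[OF simple_F])
  have at_u: "F \<inter> {f. u \<in> f} = {f \<in> F. u \<in> f}" and off_u: "F - {f. u \<in> f} = H"
    by (auto simp: edges_avoiding_def)
  have "card (incidences N F) = (\<Sum>f\<in>F. card (N \<inter> f))"
    by (rule card_incidences[OF finite_N finF])
  also have "\<dots> = (\<Sum>f\<in>{f \<in> F. u \<in> f}. card (N \<inter> f)) + (\<Sum>f\<in>H. card (N \<inter> f))"
    unfolding at_u[symmetric] off_u[symmetric] by (rule sum.Int_Diff[OF finF])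
  also have "\<dots> \<le> (\<Sum>f\<in>{f \<in> F. u \<in> f}. 1) + (\<Sum>f\<in>H. 2)"
  proof (intro add_mono sum_mono)
    fix f assume f: "f \<in> {f \<in> F. u \<in> f}"
    then have "card f = 2"
      using simple_graph_card_edge[OF simple_F] by blast
    then have "finite f"
      by (simp add: card_ge_0_finite)
    have "card (N \<inter> f) \<le> card (f - {u})"
      using u_not_neighbour \<open>finite f\<close> by (intro card_mono) auto
    also have "\<dots> = 1"
      using f \<open>card f = 2\<close> by simp
    finally show "card (N \<inter> f) \<le> 1" .
  next
    fix f assume "f \<in> H"
    then show "card (N \<inter> f) \<le> 2"
      by (intro card_edge_inter_le_two) (simp add: edges_avoiding_def)
  qed
  also have "\<dots> = card D + 2 * card H"
    using degree_eq_card_neighbours[OF simple_F, of u] neighbours_F_u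
    by (simp add: degree_def)
  finally show ?thesis
    by simp
qed

lemma card_incidences_D_H_le:
  shows "card (incidences D H) \<le> 2 * card H"
    and "card (incidences D H) \<le> card D * card H"
proof -
  have finH: "finite H"
    by (rule simple_graph_finite_edges[OF simple_H])
  have "card (incidences D H) = (\<Sum>f\<in>H. card (D \<inter> f))"
    by (rule card_incidences[OF finite_D finH])
  also have "\<dots> \<le> (\<Sum>f\<in>H. 2)"
    by (rule sum_mono, rule card_edge_inter_le_two) (simp add: edges_avoiding_def)
  finally show "card (incidences D H) \<le> 2 * card H"
    by simp
  have "card (incidences D H) \<le> card (D \<times> H)"
    using finite_D finH by (intro card_mono) (auto simp: incidences_def)
  then show "card (incidences D H) \<le> card D * card H"
    by (simp add: card_cartesian_product)
qed

lemma four_cycle_paths_at_v_subset: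
  "four_cycle_paths E v
    \<subseteq> (\<lambda>(x, z). (x, u, z)) ` {(x, z). x \<in> D \<and> z \<in> D \<and> x \<noteq> z} \<union> two_paths H"
proof
  fix t assume t_in: "t \<in> four_cycle_paths E v"
  obtain x y z where t: "t = (x, y, z)"
    by (cases t)
  have dist: "distinct [v, x, y, z]"
    and edges: "{v, x} \<in> E" "{x, y} \<in> E" "{y, z} \<in> E" "{z, v} \<in> E"
    using t_in by (simp_all add: t four_cycle_paths_def cycle4_def)
  have "x \<in> N" "z \<in> N"
    using edges(1,4) by (simp_all add: neighbours_def insert_commute)
  show "t \<in> (\<lambda>(x, z). (x, u, z)) ` {(x, z). x \<in> D \<and> z \<in> D \<and> x \<noteq> z} \<union> two_paths H"
  proof (cases "y = u")
    case True
    then have "(x, z) \<in> {(x, z). x \<in> D \<and> z \<in> D \<and> x \<noteq> z}"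
      using edges(2,3) dist by (simp add: neighbours_def insert_commute)
    then show ?thesis
      by (auto simp: t True)
  next
    case False
    have "y \<in> V"
      using edges(2) simple_graph_edge_doubleton(3)[OF simple] by blast
    with False dist have "y \<in> N"
      using vertices_eq by auto
    then have "{x, y} \<in> H" "{y, z} \<in> H"
      using edges(2,3) dist \<open>x \<in> N\<close> \<open>z \<in> N\<close> u_not_neighbour
      by (auto simp: edges_avoiding_def)
    then show ?thesis
      using dist by (simp add: t two_paths_def)
  qed
qed

lemma card_four_cycle_paths_at_v:
  "card (four_cycle_paths E v) + card D \<le> card D * card D + card (two_paths H)"
proof -
  let ?pairs = "{(x, z). x \<in> D \<and> z \<in> D \<and> x \<noteq> z}"
  have "four_cycle_paths E v \<subseteq> (\<lambda>(x, z). (x, u, z)) ` ?pairs \<union> two_paths H"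
    by (rule four_cycle_paths_at_v_subset)
  moreover have "finite ?pairs"
    using finite_D by (auto intro: finite_subset[of _ "D \<times> D"])
  ultimately have "card (four_cycle_paths E v) \<le> card ((\<lambda>(x, z). (x, u, z)) ` ?pairs \<union> two_paths H)"
    by (intro card_mono) (auto intro: finite_two_paths[OF simple_H])
  also have "\<dots> \<le> card ((\<lambda>(x, z). (x, u, z)) ` ?pairs) + card (two_paths H)"
    by (rule card_Un_le)
  also have "card ((\<lambda>(x, z). (x, u, z)) ` ?pairs) \<le> card ?pairs"
    using \<open>finite ?pairs\<close> by (rule card_image_le)
  finally show ?thesis
    using card_off_diagonal[OF finite_D] by linarith
qed

lemma card_four_cycle_paths_at_u:
  "card (four_cycle_paths F u) \<le> card (incidences D H) * (card D - 1)"
proof -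
  let ?h = "\<lambda>(x, y, z). ((x, {x, y}), z)"
  let ?targets = "SIGMA p:incidences D H. D - {fst p}"
  have finH: "finite H"
    by (rule simple_graph_finite_edges[OF simple_H])
  have fin_inc: "finite (incidences D H)"
    using finite_D finH by (auto intro: finite_subset[of _ "D \<times> H"] simp: incidences_def)
  have "inj_on ?h (four_cycle_paths F u)"
    by (auto intro!: inj_onI simp: doubleton_eq_iff)
  then have "card (four_cycle_paths F u) = card (?h ` four_cycle_paths F u)"
    by (rule card_image[symmetric])
  also have "\<dots> \<le> card ?targets"
  proof (rule card_mono)
    show "finite ?targets"
      using fin_inc finite_D by simp
    show "?h ` four_cycle_paths F u \<subseteq> ?targets"
    proof
      fix r assume "r \<in> ?h ` four_cycle_paths F u"
      then obtain x y z where r: "r = ((x, {x, y}), z)" and xyz: "(x, y, z) \<in> four_cycle_paths F u"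
        by auto
      have dist: "distinct [u, x, y, z]"
        and edges: "{u, x} \<in> F" "{x, y} \<in> F" "{z, u} \<in> F"
        using xyz by (simp_all add: four_cycle_paths_def cycle4_def)
      have "x \<in> D" "z \<in> D"
        using edges(1,3) neighbours_F_u by (auto simp: neighbours_def insert_commute)
      moreover have "{x, y} \<in> H"
        using edges(2) dist by (simp add: edges_avoiding_def)
      ultimately show "r \<in> ?targets"
        using dist by (auto simp: r incidences_def)
    qed
  qed
  also have "card ?targets = (\<Sum>p\<in>incidences D H. card (D - {fst p}))"
    using fin_inc finite_D by simp
  also have "\<dots> = (\<Sum>p\<in>incidences D H. card D - 1)"
    by (rule sum.cong) (auto simp: incidences_def)
  finally show ?thesis
    by simp
qed

lemma graph_class_bipartite_edges_v_u:
  "graph_class (card N + 2) (2 * card N) V (bipartite_edges {v, u} N)"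
proof -
  have "graph_class (card {v, u} + card N) (card {v, u} * card N) ({v, u} \<union> N)
      (bipartite_edges {v, u} N)"
    using finite_N v_notin_N u_not_neighbour D_nonempty D_subset_N
    by (intro graph_class_bipartite_edges) auto
  moreover have "card {v, u} = 2" and "{v, u} \<union> N = V"
    using u_ne_v vertices_eq by auto
  ultimately show ?thesis
    by (simp add: add.commute)
qed

lemma a4_bipartite_edges_v_u_nonpos: "a4 (bipartite_edges {v, u} N) \<le> 0"
  using finite_N v_notin_N u_not_neighbour u_ne_v[symmetric]
  by (rule a4_bipartite_edges_doubleton_nonpos)

lemma complete_bipartite_if_H_empty:
  assumes "H = {}"
  shows "is_complete_bipartite 2 (card N) V E"
proof -
  have "D = N"
    using card_D_add_card_H assms by (intro card_subset_eq[OF finite_N D_subset_N]) simp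
  have "F = (\<lambda>x. {u, x}) ` D"
    using edges_split_at[OF simple_F, of u] neighbours_F_u assms by simp
  then have "E = (\<lambda>x. {v, x}) ` N \<union> (\<lambda>x. {u, x}) ` N"
    using edges_split_at[OF simple, of v] \<open>D = N\<close> by simp
  also have "\<dots> = bipartite_edges {v, u} N"
    by (auto simp: bipartite_edges_eq_image)
  finally have "E = bipartite_edges {v, u} N" .
  moreover have "V = {v, u} \<union> N"
    using vertices_eq by auto
  moreover have "is_complete_bipartite 2 (card N) ({v, u} \<union> N) (bipartite_edges {v, u} N)"
    using v_notin_N u_not_neighbour u_ne_v by (intro is_complete_bipartite_bipartite_edges) auto
  ultimately show ?thesis
    by simp
qed

lemma four_cycle_paths_lt_matching_pairs:
  assumes "H \<noteq> {}"
  shows "card (four_cycle_paths E v) + card (four_cycle_paths F u) + card (two_matchings H)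
    < card (matching_pairs_at E v) + card (matching_pairs_at F u)"
proof -
  define d k s where "d = card D" and "k = card H" and "s = card (incidences D H)"
  have "1 \<le> d"
    using D_nonempty finite_D by (simp add: d_def Suc_le_eq card_gt_0_iff)
  moreover have "1 \<le> k"
    using assms simple_graph_finite_edges[OF simple_H] by (simp add: k_def Suc_le_eq card_gt_0_iff)
  moreover have "s \<le> 2 * k" and "s \<le> d * k"
    using card_incidences_D_H_le by (simp_all add: d_def k_def s_def)
  ultimately have key: "d * s + k < 3 * (d * k)"
    by (rule mult_add_lt_three_mult)
  have card_N: "card N = d + k"
    using card_D_add_card_H by (simp add: d_def k_def)
  have pairs_v: "card (matching_pairs_at E v) + card (incidences N F) = d * d + 2 * (d * k) + k * k"
    using card_matching_pairs_at[OF simple, of v] card_F card_N by (simp add: algebra_simps)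
  have pairs_u: "card (matching_pairs_at F u) + s = d * k"
    using card_matching_pairs_at[OF simple_F, of u] neighbours_F_u by (simp add: d_def k_def s_def)
  have incidences_v: "card (incidences N F) \<le> 2 * k + d"
    using card_incidences_N_F_le by (simp add: d_def k_def)
  have paths_v: "card (four_cycle_paths E v) + d \<le> d * d + card (two_paths H)"
    using card_four_cycle_paths_at_v by (simp add: d_def)
  have paths_u: "card (four_cycle_paths F u) + s \<le> d * s"
  proof -
    have "card (four_cycle_paths F u) \<le> s * (d - 1)"
      using card_four_cycle_paths_at_u by (simp add: d_def s_def)
    moreover have "s * (d - 1) + s = d * s"
      using \<open>1 \<le> d\<close> by (cases d) (simp_all add: algebra_simps)
    ultimately show ?thesis
      by linarith
  qed
  have paths_H: "card (two_paths H) + 2 * card (two_matchings H) + k \<le> k * k"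
    using card_two_paths_two_matchings_le[OF simple_H] by (simp add: k_def)
  \<comment> \<open>The right side is at least d^2 + 3dk + k^2 - 2k - d - s, the left side at most
    d^2 - d + ds - s + t + m with t + m \<le> k^2 - k, where t and m count the 2-paths and the
    2-matchings of H.\<close>
  show ?thesis
    using pairs_v pairs_u incidences_v paths_v paths_u paths_H key by linarith
qed

lemma a4_pos:
  assumes "H \<noteq> {}"
  shows "0 < a4 E"
proof -
  have "int (card (matching_pairs_at E v)) - int (card (four_cycle_paths E v)) + a4 F \<le> a4 E"
    by (rule a4_delete_vertex[OF simple])
  moreover have "int (card (matching_pairs_at F u)) - int (card (four_cycle_paths F u)) + a4 H \<le> a4 F"
    by (rule a4_delete_vertex[OF simple_F])
  moreover have "- int (card (two_matchings H)) \<le> a4 H"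
    by (rule a4_ge_neg_card_two_matchings[OF simple_H])
  ultimately show ?thesis
    using four_cycle_paths_lt_matching_pairs[OF assms] by linarith
qed

end

lemma max_degree_attained:
  assumes "finite V" and "V \<noteq> {}"
  obtains v where "v \<in> V" and "degree E v = max_degree V E"
proof -
  have "Max (degree E ` V) \<in> degree E ` V"
    using assms by (intro Max_in) simp_all
  then obtain v where "Max (degree E ` V) = degree E v" and "v \<in> V"
    by (rule imageE)
  then show thesis
    by (intro that) (simp_all add: max_degree_def)
qed

lemma almost_universal_vertex_if_degree:
  assumes "graph_class n (2 * n - 4) V E" and "v \<in> V" and "degree E v = n - 2" and "2 \<le> n"
  obtains u where "almost_universal_vertex V E v u"
proof -
  have simple: "simple_graph V E" and connected: "connected_graph V E"
    and card_V: "card V = n" and card_E: "card E = 2 * n - 4"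
    using assms(1) by (auto simp: graph_class_def)
  let ?N = "neighbours E v"
  have card_N: "card ?N = n - 2"
    using assms(3) degree_eq_card_neighbours[OF simple] by simp
  have N_sub: "?N \<subseteq> V - {v}"
    using neighbours_subset[OF simple] not_in_neighbours_self[OF simple] by blast
  have "card (V - {v} - ?N) = card (V - {v}) - card ?N"
    by (rule card_Diff_subset[OF finite_neighbours[OF simple] N_sub])
  also have "\<dots> = 1"
    using card_V card_N assms(2,4) simple_graph_finite_vertices[OF simple] by simp
  finally obtain u where u: "V - {v} - ?N = {u}"
    by (rule card_1_singletonE)
  show thesis
  proof (rule that, unfold_locales)
    have "V = insert v ((V - {v} - ?N) \<union> ?N)"
      using assms(2) N_sub by blast
    then show "V = insert v (insert u ?N)"
      by (simp add: u)
    have "u \<in> V - {v} - ?N"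
      using u by simp
    then show "u \<noteq> v" and "u \<notin> ?N"
      by simp_all
    show "card E = 2 * card ?N"
      using card_E card_N by simp
  qed (fact simple connected)+
qed

theorem lemma4p6:
  fixes V :: "'a set" and E :: "'a set set" and n :: nat
  assumes "n \<ge> 6"
    and "sachs4_minimal n (2 * n - 4) V E"
    and "max_degree V E = n - 2"
  shows "is_complete_bipartite 2 (n - 2) V E"
proof -
  \<comment> \<open>Of the hypothesis n \<ge> 6 the argument only uses n \<ge> 2.\<close>
  have in_class: "graph_class n (2 * n - 4) V E"
    and minimal: "\<And>V' E'. graph_class n (2 * n - 4) (V' :: 'a set) E' \<Longrightarrow> a4 E \<le> a4 E'"
    using assms(2) unfolding sachs4_minimal_def by auto
  have "finite V" and "V \<noteq> {}"
    using in_class assms(1) by (auto simp: graph_class_def simple_graph_def)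
  then obtain v where "v \<in> V" and deg_v: "degree E v = n - 2"
    using assms(3) by (metis max_degree_attained)
  obtain u where "almost_universal_vertex V E v u"
    by (rule almost_universal_vertex_if_degree[OF in_class \<open>v \<in> V\<close> deg_v]) (use assms(1) in simp)
  then interpret almost_universal_vertex V E v u .
  have card_N: "card N = n - 2"
    using deg_v degree_eq_card_neighbours[OF simple] by simp
  have "card N + 2 = n" and "2 * card N = 2 * n - 4"
    using card_N assms(1) by simp_all
  then have "a4 E \<le> a4 (bipartite_edges {v, u} N)"
    using graph_class_bipartite_edges_v_u by (intro minimal) simp
  also have "\<dots> \<le> 0"
    by (rule a4_bipartite_edges_v_u_nonpos)
  finally have "H = {}"
    using a4_pos by force
  then show ?thesis
    using complete_bipartite_if_H_empty card_N by simp
qed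

end
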